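(* Let $r_1,\ldots,r_m\in(0,\infty)$, $s\in(0,\infty]$, $p_1,\ldots,p_m\in(0,\infty]$ with $(\vec r,s)\le\vec p$, and let $w_1,\ldots,w_m$ be weights with $w=\prod_jw_j$. Then $\vec w\in A_{\vec p,(\vec r,s)}$ if and only if there are real numbers $\frac1{s_1},\ldots,\frac1{s_m}$ with $\frac1{s_j}\le\frac1{p_j}$ and $\sum_{j=1}^m\frac1{s_j}=\frac1s$ such that $\vec w\in A_{\vec p(s),(\vec r(s),\infty)}$, where \[ \vec p(s)=\Big(\tfrac{1}{\frac1{p_1}-\frac1{s_1}},\ldots,\tfrac{1}{\frac1{p_m}-\frac1{s_m}}\Big),\qquad \vec r(s)=\Big(\tfrac{1}{\frac1{r_1}-\frac1{s_1}},\ldots,\tfrac{1}{\frac1{r_m}-\frac1{s_m}}\Big). \] Moreover, in this case $[\vec w]_{\vec p,(\vec r,s)}=[\vec w]_{\vec p(s),(\vec r(s),\infty)}$.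
   Context: For a cube $Q$, $\langle f\rangle_{t,Q}=(\frac1{|Q|}\int_Q|f|^t)^{1/t}$ for $0<t<\infty$, $\langle f\rangle_{\infty,Q}=\operatorname{ess\,sup}_Q|f|$. For $\vec p=(p_1,\dots,p_m)$ put $\frac1p=\sum_j\frac1{p_j}$. $(\vec r,s)\le\vec p$ means $r_j\le p_j$ for all $j$ and $p\le s$. For weights $w_j$ with $w=\prod_jw_j$, define \[ [\vec w]_{\vec p,(\vec r,s)}:=\sup_Q\Big(\prod_{j=1}^m\langle w_j^{-1}\rangle_{t_j,Q}\Big)\langle w\rangle_{t,Q},\qquad\tfrac1{t_j}=\tfrac1{r_j}-\tfrac1{p_j},\ \tfrac1t=\tfrac1p-\tfrac1s, \] (reciprocal exponent $0$ meaning exponent $\infty$), sup over all cubes; $\vec w\in A_{\vec p,(\vec r,s)}$ means finiteness. The same formula with $s=\infty$ (i.e. $\frac1t=\frac1p$) defines $[\vec w]_{\vec p(s),(\vec r(s),\infty)}$ in terms of the reciprocals $\frac1{p_j}-\frac1{s_j}$, $\frac1{r_j}-\frac1{s_j}$. *)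

theory Defs
  imports "HOL-Analysis.Analysis" "HOL-Probability.Essential_Supremum"
begin

text \<open>Exponents live in (0,\<infinity>] and are modelled as extended reals; the reciprocal
  1/p (with 1/\<infinity> = 0) is the real number recip p.\<close>
definition recip :: "ereal \<Rightarrow> real" where
  "recip x = real_of_ereal (inverse x)"

definition cubes :: "'a::euclidean_space set set" where
  "cubes = {cbox a (a + h *\<^sub>R One) | a h. 0 < h}"

definition enn_powr :: "ennreal \<Rightarrow> real \<Rightarrow> ennreal" where
  "enn_powr x a = (if x = \<infinity> then \<infinity> else ennreal (enn2real x powr a))"

text \<open>Average \<langle>f\<rangle>_{t,Q}, parametrised by the reciprocal exponent \<rho> = 1/t \<ge> 0;
  \<rho> = 0 means t = \<infinity> (essential supremum over Q).\<close>
definition avg :: "real \<Rightarrow> ('a::euclidean_space \<Rightarrow> real) \<Rightarrow> 'a set \<Rightarrow> ennreal" where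
  "avg \<rho> f Q =
     (if \<rho> = 0 then esssup (restrict_space lebesgue Q) (\<lambda>x. ennreal \<bar>f x\<bar>)
      else enn_powr
        ((\<integral>\<^sup>+ x \<in> Q. ennreal (\<bar>f x\<bar> powr (1 / \<rho>)) \<partial>lebesgue) / emeasure lebesgue Q) \<rho>)"

definition weight :: "('a::euclidean_space \<Rightarrow> real) \<Rightarrow> bool" where
  "weight v \<longleftrightarrow> v \<in> borel_measurable lebesgue \<and> (AE x in lebesgue. 0 < v x)
      \<and> (\<forall>K. compact K \<longrightarrow> set_integrable lebesgue K v)"

text \<open>(r,s) \<le> p : r_j \<le> p_j for all j and p \<le> s, where 1/p = \<Sum> 1/p_j.\<close>
definition exp_le :: "nat \<Rightarrow> (nat \<Rightarrow> ereal) \<Rightarrow> ereal \<Rightarrow> (nat \<Rightarrow> ereal) \<Rightarrow> bool" where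
  "exp_le m r s p \<longleftrightarrow> (\<forall>j<m. r j \<le> p j) \<and> recip s \<le> (\<Sum>j<m. recip (p j))"

text \<open>The constant [w]_{p,(r,s)} (possibly \<infinity>), with 1/t_j = 1/r_j - 1/p_j and
  1/t = 1/p - 1/s, w = \<Prod> w_j.\<close>
definition Aconst :: "nat \<Rightarrow> (nat \<Rightarrow> 'a::euclidean_space \<Rightarrow> real) \<Rightarrow> (nat \<Rightarrow> ereal)
    \<Rightarrow> (nat \<Rightarrow> ereal) \<Rightarrow> ereal \<Rightarrow> ennreal" where
  "Aconst m w p r s =
     (SUP Q\<in>cubes.
        (\<Prod>j<m. avg (recip (r j) - recip (p j)) (\<lambda>x. inverse (w j x)) Q)
        * avg ((\<Sum>j<m. recip (p j)) - recip s) (\<lambda>x. \<Prod>j<m. w j x) Q)"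

definition in_A :: "nat \<Rightarrow> (nat \<Rightarrow> 'a::euclidean_space \<Rightarrow> real) \<Rightarrow> (nat \<Rightarrow> ereal)
    \<Rightarrow> (nat \<Rightarrow> ereal) \<Rightarrow> ereal \<Rightarrow> bool" where
  "in_A m w p r s \<longleftrightarrow> Aconst m w p r s < \<infinity>"

text \<open>Shifted exponents: 1/p_j(s) = 1/p_j - 1/s_j, where \<sigma> j = 1/s_j.\<close>
definition shift_exp :: "(nat \<Rightarrow> ereal) \<Rightarrow> (nat \<Rightarrow> real) \<Rightarrow> nat \<Rightarrow> ereal" where
  "shift_exp q \<sigma> j = inverse (ereal (recip (q j) - \<sigma> j))"

end

theory Submission
  imports Defs
begin

text \<open>The constant [w]_{p,(r,s)} depends on the exponents only through the reciprocal
  differences 1/r_j - 1/p_j and 1/p - 1/s. Subtracting 1/s_j from 1/r_j and from 1/p_j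
  leaves the former unchanged, and it turns 1/p - 1/s into 1/p(s) - 0 as soon as
  \<Sum> 1/s_j = 1/s. So the two constants coincide for every admissible choice of the s_j,
  and an admissible choice exists because 1/s \<le> 1/p.\<close>

lemma recip_infinity [simp]: "recip \<infinity> = 0"
  unfolding recip_def by simp

lemma recip_shift_exp [simp]: "recip (shift_exp q \<sigma> j) = recip (q j) - \<sigma> j"
  unfolding shift_exp_def recip_def[of "inverse _"]
  by (cases "recip (q j) - \<sigma> j = 0") auto

lemma Aconst_shift_exp:
  assumes "(\<Sum>j<m. \<sigma> j) = recip s"
  shows "Aconst m w (shift_exp p \<sigma>) (shift_exp r \<sigma>) \<infinity> = Aconst m w p r s"
proof -
  have "(\<Sum>j<m. recip (shift_exp p \<sigma> j)) - recip \<infinity> = (\<Sum>j<m. recip (p j)) - recip s"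
    using assms by (simp add: sum_subtractf)
  then show ?thesis
    unfolding Aconst_def by simp
qed

lemma exists_sum_eq_below:
  fixes a :: "'i \<Rightarrow> real"
  assumes "finite A" "i \<in> A" "c \<le> sum a A"
  obtains \<sigma> where "\<forall>j\<in>A. \<sigma> j \<le> a j" "sum \<sigma> A = c"
proof
  define \<sigma> where "\<sigma> = a(i := a i - (sum a A - c))"
  show "\<forall>j\<in>A. \<sigma> j \<le> a j"
    using assms(3) by (simp add: \<sigma>_def)
  have "sum \<sigma> A = sum a A - (sum a A - c)"
    using assms(1,2) by (simp add: \<sigma>_def sum.remove)
  then show "sum \<sigma> A = c"
    by simp
qed

theorem lemma2p11:
  fixes m :: nat and w :: "nat \<Rightarrow> 'a::euclidean_space \<Rightarrow> real"
    and r p :: "nat \<Rightarrow> ereal" and s :: ereal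
  assumes "1 \<le> m"
    and "\<forall>j<m. 0 < r j \<and> r j < \<infinity>"
    and "0 < s"
    and "\<forall>j<m. 0 < p j"
    and "exp_le m r s p"
    and "\<forall>j<m. weight (w j)"
  shows "(in_A m w p r s \<longleftrightarrow>
           (\<exists>\<sigma>::nat \<Rightarrow> real. (\<forall>j<m. \<sigma> j \<le> recip (p j)) \<and> (\<Sum>j<m. \<sigma> j) = recip s
              \<and> in_A m w (shift_exp p \<sigma>) (shift_exp r \<sigma>) \<infinity>))
       \<and> (\<forall>\<sigma>::nat \<Rightarrow> real. (\<forall>j<m. \<sigma> j \<le> recip (p j)) \<and> (\<Sum>j<m. \<sigma> j) = recip s
              \<and> in_A m w (shift_exp p \<sigma>) (shift_exp r \<sigma>) \<infinity>
            \<longrightarrow> Aconst m w p r s = Aconst m w (shift_exp p \<sigma>) (shift_exp r \<sigma>) \<infinity>)"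
proof -
  have "recip s \<le> (\<Sum>j<m. recip (p j))"
    using assms(5) unfolding exp_le_def by simp
  moreover have "0 \<in> {..<m}"
    using assms(1) by simp
  ultimately obtain \<sigma> where "\<forall>j\<in>{..<m}. \<sigma> j \<le> recip (p j)" "(\<Sum>j<m. \<sigma> j) = recip s"
    using exists_sum_eq_below[OF finite_lessThan] by blast
  then have \<sigma>: "\<forall>j<m. \<sigma> j \<le> recip (p j)" "(\<Sum>j<m. \<sigma> j) = recip s"
    by simp_all
  show ?thesis
    unfolding in_A_def using \<sigma> Aconst_shift_exp by metis
qed

end
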